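(* For a prime $p$ and an integer $n\geq p$, $B_{n-p}\equiv V_n\pmod p$.
   Context: $B_n$ is the $n$-th Bell number (number of partitions of an $n$-element set). $V_n$ is the number of partitions of $\{1,\dots,n\}$ containing no singleton blocks; equivalently $\sum_{n\geq0}V_n\frac{t^n}{n!}=e^{e^t-1-t}$. *)

theory Defs
  imports Main "HOL-Library.Disjoint_Sets" "HOL-Number_Theory.Cong"
begin

definition Bell :: "nat \<Rightarrow> nat" where
  "Bell n = card {P. partition_on {1..n} P}"

definition V :: "nat \<Rightarrow> nat" where
  "V n = card {P. partition_on {1..n} P \<and> (\<forall>b\<in>P. card b \<noteq> 1)}"

end

theory Submission
  imports Defs "HOL-Combinatorics.Orbits" "HOL-Combinatorics.Cycles"
begin

(* The cyclic shift of the last p points m+1, ..., m+p acts with period p on the partitions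
   of {1..m+p} without singleton blocks.  As p is prime, every orbit of this action that is not
   a fixed point has exactly p elements, so V(m+p) is congruent mod p to the number of invariant
   partitions.  A partition without singletons is invariant iff the p shifted points lie in a
   common block; deleting them from that block and splitting the rest of the block into
   singletons is a bijection onto the partitions of {1..m}, which are counted by B_m. *)

subsection \<open>Orbits of a map of prime period\<close>

lemma funpow_gcd_fixpoint:
  assumes "(f ^^ a) x = x" and "(f ^^ b) x = x"
  shows "(f ^^ gcd a b) x = x"
  using assms
proof (induction a b rule: gcd_nat_induct)
  case (step m n)
  then show ?case by (metis funpow_mod_eq gcd_red_nat)
qed simp

lemma funpow_prime_period_fixpoint:
  assumes "prime p" and "(f ^^ p) x = x" and "(f ^^ k) x = x" and "\<not> p dvd k"
  shows "f x = x"
proof -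
  have "gcd k p = 1"
    using prime_imp_coprime[OF assms(1,4)] by (simp add: coprime_commute)
  then show ?thesis
    using funpow_gcd_fixpoint[OF assms(3,2)] by simp
qed

lemma self_in_orbit_if_periodic:
  assumes "(f ^^ n) x = x" and "0 < n"
  shows "x \<in> orbit f x"
  unfolding orbit_altdef using assms by (auto intro!: exI[of _ n])

lemma orbit_subset_if_image_subset:
  assumes "f ` X \<subseteq> X" and "x \<in> X"
  shows "orbit f x \<subseteq> X"
proof
  fix y assume "y \<in> orbit f x"
  then show "y \<in> X" by induction (use assms in auto)
qed

lemma fixpoint_if_fixpoint_in_orbit:
  assumes "x \<in> orbit f x" and "y \<in> orbit f x" and "f y = y"
  shows "f x = x"
proof -
  have "orbit f y = {y}"
    using assms(3) by (simp add: orbit_eq_singleton_iff)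
  moreover have "x \<in> orbit f y"
    by (rule orbit_swap[OF assms(1,2)])
  ultimately show ?thesis
    using assms(3) by simp
qed

lemma disjoint_orbits:
  assumes "x \<in> orbit f x" and "y \<in> orbit f y" and "orbit f x \<noteq> orbit f y"
  shows "orbit f x \<inter> orbit f y = {}"
  using assms by (blast intro: orbit_trans orbit_swap)

lemma card_orbit_dvd_period:
  assumes period: "(f ^^ n) x = x" and "0 < n"
  shows "card (orbit f x) dvd n"
proof -
  have x_in: "x \<in> orbit f x"
    using self_in_orbit_if_periodic assms .
  define d where "d = funpow_dist1 f x x"
  have "card (orbit f x) = d"
    unfolding d_def orbit_conv_funpow_dist1[OF x_in]
    using inj_on_funpow_dist1[OF x_in] by (simp add: card_image)
  moreover have "(f ^^ d) x = x"
    unfolding d_def by (rule funpow_dist1_prop[OF x_in])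
  then have "(f ^^ (n mod d)) x = x"
    using period by (simp add: funpow_mod_eq)
  then have "n mod d = 0"
    using funpow_dist1_least[of "n mod d" f x x] by (auto simp: d_def)
  ultimately show ?thesis by auto
qed

lemma card_orbit_eq_prime_period:
  assumes "prime p" and "(f ^^ p) x = x" and "f x \<noteq> x"
  shows "card (orbit f x) = p"
proof -
  have "0 < p"
    using prime_gt_0_nat[OF assms(1)] .
  have "x \<in> orbit f x"
    using self_in_orbit_if_periodic assms(2) \<open>0 < p\<close> .
  have "card (orbit f x) \<noteq> 1"
  proof
    assume "card (orbit f x) = 1"
    then obtain y where "orbit f x = {y}" by (rule card_1_singletonE)
    then have "orbit f x = {x}" using \<open>x \<in> orbit f x\<close> by simp
    then show False using assms(3) by (simp add: orbit_eq_singleton_iff)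
  qed
  moreover have "card (orbit f x) dvd p"
    using assms(2) \<open>0 < p\<close> by (rule card_orbit_dvd_period)
  ultimately show ?thesis
    using assms(1) by (auto simp: prime_nat_iff)
qed

lemma card_cong_card_fixpoints:
  fixes f :: "'a \<Rightarrow> 'a"
  assumes "prime p" and "finite X" and invariant: "f ` X \<subseteq> X"
    and period: "\<And>x. x \<in> X \<Longrightarrow> (f ^^ p) x = x"
  shows "[card X = card {x\<in>X. f x = x}] (mod p)"
proof -
  define N where "N = {x\<in>X. f x \<noteq> x}"
  have self_in_orbit: "x \<in> orbit f x" if "x \<in> X" for x
    using self_in_orbit_if_periodic period[OF that] prime_gt_0_nat[OF \<open>prime p\<close>] .
  have orbit_in_N: "orbit f x \<subseteq> N" if "x \<in> N" for x
    using that orbit_subset_if_image_subset[OF invariant] fixpoint_if_fixpoint_in_orbit self_in_orbit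
    by (fastforce simp: N_def)
  have "finite N"
    using \<open>finite X\<close> by (simp add: N_def)
  have orbits_cover: "\<Union> (orbit f ` N) = N"
    using orbit_in_N self_in_orbit by (auto simp: N_def)
  have "p * card (orbit f ` N) = card (\<Union> (orbit f ` N))"
  proof (rule card_partition)
    show "finite (orbit f ` N)" "finite (\<Union> (orbit f ` N))"
      using \<open>finite N\<close> orbits_cover by simp_all
    show "card c = p" if "c \<in> orbit f ` N" for c
      using that card_orbit_eq_prime_period[OF \<open>prime p\<close> period] by (auto simp: N_def)
    show "c1 \<inter> c2 = {}" if "c1 \<in> orbit f ` N" "c2 \<in> orbit f ` N" "c1 \<noteq> c2" for c1 c2
    proof -
      from that obtain x y where "x \<in> X" "y \<in> X" "c1 = orbit f x" "c2 = orbit f y"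
        by (auto simp: N_def)
      then show ?thesis
        using disjoint_orbits self_in_orbit \<open>c1 \<noteq> c2\<close> by metis
    qed
  qed
  then have card_N: "card N = p * card (orbit f ` N)"
    using orbits_cover by simp
  have "card X = card (N \<union> {x\<in>X. f x = x})"
    by (rule arg_cong[where f = card]) (auto simp: N_def)
  also have "\<dots> = card N + card {x\<in>X. f x = x}"
    using \<open>finite X\<close> by (intro card_Un_disjoint) (auto simp: N_def)
  finally show ?thesis
    using card_N by (simp add: cong_def)
qed

subsection \<open>Partitions invariant under a cycle of prime length\<close>

lemma funpow_image:
  fixes f :: "'a \<Rightarrow> 'a"
  shows "(`) f ^^ n = (`) (f ^^ n)"
  by (induction n) (simp_all add: image_comp fun_eq_iff)

lemma cycle_of_list_funpow_nth:
  assumes "distinct cs" and "i < length cs"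
  shows "(cycle_of_list cs ^^ k) (cs ! i) = cs ! ((k + i) mod length cs)"
proof -
  have "(cycle_of_list cs ^^ k) (cs ! i) = map (cycle_of_list cs ^^ k) cs ! i"
    using assms(2) by simp
  also have "\<dots> = rotate k cs ! i"
    using cyclic_rotation[OF assms(1)] by simp
  finally show ?thesis
    using assms(2) by (simp add: nth_rotate)
qed

lemma set_cycle_of_list_subset_if_image_fixes:
  assumes "distinct cs" and "cycle_of_list cs ` B = B" and "cs ! 0 \<in> B"
  shows "set cs \<subseteq> B"
proof
  fix y assume "y \<in> set cs"
  then obtain i where "i < length cs" "y = cs ! i"
    by (auto simp: in_set_conv_nth)
  then have "(cycle_of_list cs ^^ i) (cs ! 0) = y"
    using cycle_of_list_funpow_nth[OF assms(1), of 0 i] by (cases cs) auto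
  moreover have "((`) (cycle_of_list cs) ^^ i) B = B"
    using assms(2) by (induction i) auto
  ultimately show "y \<in> B"
    using assms(3) by (metis funpow_image image_eqI)
qed

lemma cycle_of_list_funpow_length:
  assumes "distinct cs"
  shows "cycle_of_list cs ^^ length cs = id"
proof
  fix x
  show "(cycle_of_list cs ^^ length cs) x = id x"
  proof (cases "x \<in> set cs")
    case True
    then obtain i where "i < length cs" "x = cs ! i"
      by (auto simp: in_set_conv_nth)
    then show ?thesis
      using cycle_of_list_funpow_nth[OF assms] by simp
  next
    case False
    then show ?thesis
      by (simp add: permutes_not_in[OF permutes_funpow[OF cycle_permutes]])
  qed
qed

lemma permutes_image_eq_if_subset_or_disjoint:
  assumes "\<sigma> permutes S" and "S \<subseteq> b \<or> b \<inter> S = {}"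
  shows "\<sigma> ` b = b"
proof -
  have "\<sigma> ` b = \<sigma> ` (b \<inter> S) \<union> \<sigma> ` (b - S)"
    by blast
  also have "\<sigma> ` (b \<inter> S) = b \<inter> S"
    using assms permutes_image[OF assms(1)] by (metis Int_absorb1 image_empty)
  also have "\<sigma> ` (b - S) = b - S"
    using assms(1) by (auto simp: permutes_not_in image_iff)
  finally show ?thesis by blast
qed

lemma partition_on_block_eq:
  assumes "partition_on A P" and "b \<in> P" and "c \<in> P" and "x \<in> b" and "x \<in> c"
  shows "b = c"
  using assms disjointD[OF partition_onD2[OF assms(1)]] by blast

lemma partition_on_image_permutes:
  assumes "\<sigma> permutes S" and "S \<subseteq> U" and "partition_on U P"
  shows "partition_on U ((`) \<sigma> ` P)"
proof -
  have "\<sigma> permutes U"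
    using assms(1,2) by (rule permutes_subset)
  then have "partition_on U ((`) \<sigma> ` P - {{}})"
    using partition_on_inj_image[OF assms(3), of \<sigma>] by (simp add: permutes_image permutes_inj_on)
  moreover have "{} \<notin> (`) \<sigma> ` P"
    using partition_onD3[OF assms(3)] by auto
  ultimately show ?thesis by simp
qed

lemma image_permutes_partition_eq_if_block_superset:
  assumes "\<sigma> permutes S" and P: "partition_on U P" and "K \<in> P" and "S \<subseteq> K"
  shows "(`) \<sigma> ` P = P"
proof -
  have "\<sigma> ` b = b" if "b \<in> P" for b
  proof (rule permutes_image_eq_if_subset_or_disjoint[OF assms(1)])
    show "S \<subseteq> b \<or> b \<inter> S = {}"
      using partition_on_block_eq[OF P that \<open>K \<in> P\<close>] \<open>S \<subseteq> K\<close> by blast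
  qed
  then show ?thesis
    by simp
qed

lemma funpow_image_mem_if_image_fixes:
  assumes "(`) \<sigma> ` P = P" and "b \<in> P"
  shows "(\<sigma> ^^ k) ` b \<in> P"
proof (induction k)
  case (Suc k)
  then have "\<sigma> ` (\<sigma> ^^ k) ` b \<in> (`) \<sigma> ` P" by blast
  then show ?case using assms(1) by (simp add: image_comp)
qed (use assms(2) in simp)

text \<open>Primality enters here: some power of the cycle that is not a multiple of its length
  maps the block of the first point of the cycle to itself, hence so does the cycle.\<close>

lemma block_superset_if_image_cycle_of_list_fixes:
  assumes cs: "distinct cs" and prime: "prime (length cs)"
    and P: "partition_on U P" and "set cs \<subseteq> U" and no_singletons: "\<forall>b\<in>P. card b \<noteq> 1"
    and fixed: "(`) (cycle_of_list cs) ` P = P"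
  shows "\<exists>K\<in>P. set cs \<subseteq> K"
proof -
  define \<sigma> where "\<sigma> = cycle_of_list cs"
  define p where "p = length cs"
  have image_in_P: "(\<sigma> ^^ k) ` b \<in> P" if "b \<in> P" for b k
    using funpow_image_mem_if_image_fixes fixed that by (simp add: \<sigma>_def)
  have "0 < p"
    using prime_gt_0_nat[OF prime] by (simp add: p_def)
  have orbit_nth: "(\<sigma> ^^ i) (cs ! 0) = cs ! i" if "i < p" for i
    using cycle_of_list_funpow_nth[OF cs, of 0 i] that \<open>0 < p\<close> by (simp add: \<sigma>_def p_def)
  obtain B where B: "B \<in> P" "cs ! 0 \<in> B"
    using P \<open>set cs \<subseteq> U\<close> \<open>0 < p\<close> by (metis nth_mem p_def partition_onD1 subsetD UnionE)
  have "B \<noteq> {cs ! 0}"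
    using no_singletons B(1) by force
  then obtain b where b: "b \<in> B" "b \<noteq> cs ! 0"
    using B(2) by blast
  obtain k where "(\<sigma> ^^ k) ` B = B" and "\<not> p dvd k"
  proof (cases "b \<in> set cs")
    case True
    then obtain i where i: "i < p" "b = cs ! i"
      by (auto simp: in_set_conv_nth p_def)
    then have "b \<in> (\<sigma> ^^ i) ` B"
      using orbit_nth B(2) by force
    then have "(\<sigma> ^^ i) ` B = B"
      using partition_on_block_eq[OF P image_in_P[OF B(1)] B(1)] b(1) by blast
    moreover have "\<not> p dvd i"
      using i b(2) by (auto dest: dvd_imp_le)
    ultimately show ?thesis by (rule that)
  next
    case False
    then have "b \<in> \<sigma> ` B"
      using b(1) permutes_not_in[OF cycle_permutes] by (metis \<sigma>_def image_eqI)
    then have "(\<sigma> ^^ 1) ` B = B"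
      using partition_on_block_eq[OF P image_in_P[OF B(1), of 1] B(1)] b(1) by simp
    moreover have "\<not> p dvd 1"
      using prime by (simp add: p_def prime_nat_iff)
    ultimately show ?thesis by (rule that)
  qed
  then have "((`) \<sigma> ^^ k) B = B" "((`) \<sigma> ^^ p) B = B"
    using cycle_of_list_funpow_length[OF cs] by (simp_all add: funpow_image \<sigma>_def p_def)
  then have "\<sigma> ` B = B"
    using funpow_prime_period_fixpoint prime \<open>\<not> p dvd k\<close> by (metis p_def)
  then have "set cs \<subseteq> B"
    using set_cycle_of_list_subset_if_image_fixes[OF cs] B(2) by (simp add: \<sigma>_def)
  then show ?thesis
    using B(1) by blast
qed

lemma image_cycle_of_list_fixes_partition_iff:
  assumes "distinct cs" and "prime (length cs)"
    and "partition_on U P" and "set cs \<subseteq> U" and "\<forall>b\<in>P. card b \<noteq> 1"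
  shows "(`) (cycle_of_list cs) ` P = P \<longleftrightarrow> (\<exists>K\<in>P. set cs \<subseteq> K)"
  using block_superset_if_image_cycle_of_list_fixes[OF assms]
    image_permutes_partition_eq_if_block_superset[OF cycle_permutes assms(3)] by blast

subsection \<open>Absorbing the singleton blocks into a fixed block\<close>

lemma partition_on_Diff_blocks:
  assumes "partition_on A P" and "C \<subseteq> P"
  shows "partition_on (A - \<Union>C) (P - C)"
  using assms disjointD[OF partition_onD2[OF assms(1)]]
  by (auto simp: partition_on_def disjoint_def)

lemma partition_on_Un:
  assumes "partition_on A P" and "partition_on B Q" and "A \<inter> B = {}"
  shows "partition_on (A \<union> B) (P \<union> Q)"
  using assms by (auto simp: partition_on_def intro: disjoint_union)

lemma card_1_blocks_eq_singletons: "{b\<in>Q. card b = 1} = (\<lambda>x. {x}) ` \<Union>{b\<in>Q. card b = 1}"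
  by (auto simp: card_1_singleton_iff)

definition absorb_singletons :: "'a set \<Rightarrow> 'a set set \<Rightarrow> 'a set set" where
  "absorb_singletons R Q = insert (R \<union> \<Union>{b\<in>Q. card b = 1}) {b\<in>Q. card b \<noteq> 1}"

definition split_block :: "'a set \<Rightarrow> 'a set set \<Rightarrow> 'a set set" where
  "split_block R P = {b\<in>P. b \<inter> R = {}} \<union> (\<lambda>x. {x}) ` (\<Union>{b\<in>P. b \<inter> R \<noteq> {}} - R)"

lemma split_block_eq:
  assumes "partition_on U P" and "K \<in> P" and "R \<subseteq> K" and "R \<noteq> {}"
  shows "split_block R P = (P - {K}) \<union> (\<lambda>x. {x}) ` (K - R)"
proof -
  have "{b\<in>P. b \<inter> R \<noteq> {}} = {K}"
    using assms partition_on_block_eq[OF assms(1)] by blast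
  moreover have "{b\<in>P. b \<inter> R = {}} = P - {K}"
    using assms partition_on_block_eq[OF assms(1)] by blast
  ultimately show ?thesis
    by (simp add: split_block_def)
qed

lemma partition_on_absorb_singletons:
  assumes Q: "partition_on A Q" and "A \<inter> R = {}" and "R \<noteq> {}"
  shows "partition_on (A \<union> R) (absorb_singletons R Q)"
proof -
  define S where "S = \<Union>{b\<in>Q. card b = 1}"
  have "{b\<in>Q. card b \<noteq> 1} = Q - {b\<in>Q. card b = 1}" by blast
  then have Q1: "partition_on (A - S) {b\<in>Q. card b \<noteq> 1}"
    using partition_on_Diff_blocks[OF Q, of "{b\<in>Q. card b = 1}"] by (simp add: S_def)
  have "S \<subseteq> A"
    using partition_onD1[OF Q] by (auto simp: S_def)
  have "partition_on (A \<union> R) (insert (R \<union> S) {b\<in>Q. card b \<noteq> 1})"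
  proof (subst partition_on_insert)
    show "disjnt (R \<union> S) (\<Union>{b\<in>Q. card b \<noteq> 1})"
      using partition_onD1[OF Q1] \<open>A \<inter> R = {}\<close> by (auto simp: disjnt_def)
    have "A \<union> R - (R \<union> S) = A - S"
      using \<open>A \<inter> R = {}\<close> by blast
    then show "partition_on (A \<union> R - (R \<union> S)) {b\<in>Q. card b \<noteq> 1} \<and> R \<union> S \<subseteq> A \<union> R \<and> R \<union> S \<noteq> {}"
      using Q1 \<open>S \<subseteq> A\<close> \<open>R \<noteq> {}\<close> by auto
  qed
  then show ?thesis
    by (simp add: absorb_singletons_def S_def)
qed

lemma absorb_singletons_no_singletons:
  assumes "2 \<le> card R" and "b \<in> absorb_singletons R Q"
  shows "card b \<noteq> 1"
proof -
  have "R \<subseteq> b \<or> card b \<noteq> 1"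
    using assms(2) by (auto simp: absorb_singletons_def)
  moreover have "card b \<noteq> 1" if "R \<subseteq> b"
  proof (cases "finite b")
    case True
    then show ?thesis using card_mono[OF True that] assms(1) by linarith
  qed simp
  ultimately show ?thesis by blast
qed

lemma partition_on_split_block:
  assumes P: "partition_on (A \<union> R) P" and "K \<in> P" and "R \<subseteq> K"
    and "A \<inter> R = {}" and "R \<noteq> {}"
  shows "partition_on A (split_block R P)"
proof -
  have "partition_on (A \<union> R - K) (P - {K})"
    using partition_on_Diff_blocks[OF P, of "{K}"] \<open>K \<in> P\<close> by simp
  then have "partition_on ((A \<union> R - K) \<union> (K - R)) ((P - {K}) \<union> (\<lambda>x. {x}) ` (K - R))"
    using partition_on_singletons by (rule partition_on_Un) blast
  moreover have "(A \<union> R - K) \<union> (K - R) = A"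
    using partition_onD1[OF P] \<open>K \<in> P\<close> \<open>R \<subseteq> K\<close> \<open>A \<inter> R = {}\<close> by blast
  ultimately show ?thesis
    using split_block_eq[OF assms(1-3,5)] by simp
qed

lemma split_block_absorb_singletons:
  assumes Q: "partition_on A Q" and "A \<inter> R = {}" and "R \<noteq> {}"
  shows "split_block R (absorb_singletons R Q) = Q"
proof -
  define S where "S = \<Union>{b\<in>Q. card b = 1}"
  have "S \<subseteq> A"
    using partition_onD1[OF Q] by (auto simp: S_def)
  have "split_block R (absorb_singletons R Q)
      = (absorb_singletons R Q - {R \<union> S}) \<union> (\<lambda>x. {x}) ` (R \<union> S - R)"
    by (rule split_block_eq[OF partition_on_absorb_singletons[OF assms]])
      (use \<open>R \<noteq> {}\<close> in \<open>auto simp: absorb_singletons_def S_def\<close>)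
  also have "absorb_singletons R Q - {R \<union> S} = {b\<in>Q. card b \<noteq> 1}"
    using partition_onD1[OF Q] \<open>A \<inter> R = {}\<close> \<open>R \<noteq> {}\<close>
    by (auto simp: absorb_singletons_def S_def)
  also have "R \<union> S - R = S"
    using \<open>S \<subseteq> A\<close> \<open>A \<inter> R = {}\<close> by blast
  also have "(\<lambda>x. {x}) ` S = {b\<in>Q. card b = 1}"
    unfolding S_def by (rule card_1_blocks_eq_singletons[symmetric])
  finally show ?thesis by blast
qed

lemma absorb_singletons_split_block:
  assumes P: "partition_on U P" and "K \<in> P" and "R \<subseteq> K" and "R \<noteq> {}"
    and no_singletons: "\<forall>b\<in>P. card b \<noteq> 1"
  shows "absorb_singletons R (split_block R P) = P"
proof -
  let ?P' = "(P - {K}) \<union> (\<lambda>x. {x}) ` (K - R)"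
  have "{b\<in>?P'. card b = 1} = (\<lambda>x. {x}) ` (K - R)"
    using no_singletons by auto
  moreover have "{b\<in>?P'. card b \<noteq> 1} = P - {K}"
    using no_singletons by auto
  ultimately have "absorb_singletons R ?P' = insert (R \<union> (K - R)) (P - {K})"
    by (simp add: absorb_singletons_def)
  also have "\<dots> = P"
    using \<open>K \<in> P\<close> \<open>R \<subseteq> K\<close> by (simp add: Un_absorb1 insert_absorb)
  finally show ?thesis
    using split_block_eq[OF assms(1-4)] by simp
qed

lemma card_partitions_with_block_containing:
  assumes "A \<inter> R = {}" and "2 \<le> card R"
  shows "card {P. partition_on (A \<union> R) P \<and> (\<forall>b\<in>P. card b \<noteq> 1) \<and> (\<exists>K\<in>P. R \<subseteq> K)}
    = card {Q. partition_on A Q}"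
    (is "card ?T = card ?Q")
proof -
  have "R \<noteq> {}"
    using assms(2) by auto
  have "bij_betw (absorb_singletons R) ?Q ?T"
  proof (rule bij_betw_byWitness[where f' = "split_block R"])
    show "\<forall>Q\<in>?Q. split_block R (absorb_singletons R Q) = Q"
      using split_block_absorb_singletons[OF _ assms(1) \<open>R \<noteq> {}\<close>] by simp
    show "absorb_singletons R ` ?Q \<subseteq> ?T"
      using partition_on_absorb_singletons[OF _ assms(1) \<open>R \<noteq> {}\<close>]
        absorb_singletons_no_singletons[OF assms(2)]
      by (auto simp: absorb_singletons_def)
    have "absorb_singletons R (split_block R P) = P \<and> split_block R P \<in> ?Q" if "P \<in> ?T" for P
    proof -
      from that obtain K where P: "partition_on (A \<union> R) P" "\<forall>b\<in>P. card b \<noteq> 1"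
        and K: "K \<in> P" "R \<subseteq> K"
        by blast
      show ?thesis
        using absorb_singletons_split_block[OF P(1) K \<open>R \<noteq> {}\<close> P(2)]
          partition_on_split_block[OF P(1) K assms(1) \<open>R \<noteq> {}\<close>] by simp
    qed
    then show "\<forall>P\<in>?T. absorb_singletons R (split_block R P) = P" "split_block R ` ?T \<subseteq> ?Q"
      by auto
  qed
  then show ?thesis
    by (simp add: bij_betw_same_card)
qed

lemma V_add_prime_cong_Bell:
  assumes "prime p"
  shows "[V (m + p) = Bell m] (mod p)"
proof -
  define cs where "cs = [Suc m..<Suc (m + p)]"
  define F where "F = (`) ((`) (cycle_of_list cs))"
  define X where "X = {P. partition_on {1..m + p} P \<and> (\<forall>b\<in>P. card b \<noteq> 1)}"
  have cs: "distinct cs" "length cs = p" "set cs = {m<..m + p}"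
    by (auto simp: cs_def)
  have "set cs \<subseteq> {1..m + p}"
    by (auto simp: cs)
  have "finite X"
    using finitely_many_partition_on[of "{1..m + p}"] by (simp add: X_def)
  have invariant: "F ` X \<subseteq> X"
    using partition_on_image_permutes[OF cycle_permutes \<open>set cs \<subseteq> _\<close>]
    by (auto simp: X_def F_def card_image[OF permutes_inj_on[OF cycle_permutes]])
  have period: "(F ^^ p) P = P" for P
    using cycle_of_list_funpow_length[OF cs(1)] by (simp add: F_def funpow_image cs(2))
  have "[card X = card {P\<in>X. F P = P}] (mod p)"
    by (rule card_cong_card_fixpoints[OF assms \<open>finite X\<close> invariant period])
  also have "{P\<in>X. F P = P}
      = {P. partition_on ({1..m} \<union> set cs) P \<and> (\<forall>b\<in>P. card b \<noteq> 1) \<and> (\<exists>K\<in>P. set cs \<subseteq> K)}"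
  proof -
    have "F P = P \<longleftrightarrow> (\<exists>K\<in>P. set cs \<subseteq> K)" if "P \<in> X" for P
      using image_cycle_of_list_fixes_partition_iff[OF cs(1) _ _ \<open>set cs \<subseteq> _\<close>] that assms
      by (simp add: X_def F_def cs(2))
    moreover have "{1..m} \<union> set cs = {1..m + p}"
      using prime_gt_0_nat[OF assms] by (auto simp: cs)
    ultimately show ?thesis
      by (auto simp: X_def)
  qed
  also have "card \<dots> = Bell m"
    unfolding Bell_def using prime_ge_2_nat[OF assms]
    by (intro card_partitions_with_block_containing) (auto simp: cs)
  finally show ?thesis
    by (simp add: V_def X_def)
qed

theorem corollary3:
  fixes p n :: nat
  assumes "prime p" and "n \<ge> p"
  shows "[Bell (n - p) = V n] (mod p)"
  using V_add_prime_cong_Bell[OF assms(1), of "n - p"] assms(2) by (simp add: cong_sym_eq)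

end
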